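(* Let $A\in\mathbb{R}^{n\times n}$ be nonsingular with $\rho(|A^{-1}|)<1/3$. Then for every $b\in\mathbb{R}^n$ and every starting vector $x^0\in\mathbb{R}^n$, the generalized Newton method $x^{k+1}=(A-D(x^k))^{-1}b$ is well defined for all $k\ge 0$ (each $A-D(x^k)$ is nonsingular), and the sequence $\{x^k\}$ converges to the unique solution $x^*$ of $Ax-|x|=b$.
   Context: For a matrix $M=[m_{ij}]$, $|M|=[|m_{ij}|]$ is the entrywise absolute value; for a vector $x$, $|x|$ is the componentwise absolute value. $\rho(\cdot)$ is the spectral radius. $\mathrm{sign}(x)$ is the vector whose components are $1,0,-1$ according as the corresponding component of $x$ is positive, zero, negative, and $D(x)=\mathrm{diag}(\mathrm{sign}(x))$. The generalized Newton method for $Ax-|x|=b$ is the iteration $x^{k+1}=(A-D(x^k))^{-1}b$ from a given $x^0$. *)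

theory Defs
  imports "HOL-Analysis.Analysis"
begin

definition mat_abs :: "real^'n^'m \<Rightarrow> real^'n^'m" where
  "mat_abs M = (\<chi> i j. \<bar>M $ i $ j\<bar>)"

definition vec_abs :: "real^'n \<Rightarrow> real^'n" where
  "vec_abs x = (\<chi> i. \<bar>x $ i\<bar>)"

definition Dsign :: "real^'n \<Rightarrow> real^'n^'n" where
  "Dsign x = (\<chi> i j. if i = j then sgn (x $ i) else 0)"

definition spectral_radius :: "real^'n^'n \<Rightarrow> real" where
  "spectral_radius M =
     Max {cmod z | z. det ((\<chi> i j. (if i = j then z else 0) - complex_of_real (M $ i $ j))
                           :: complex^'n^'n) = 0}"

primrec gen_newton :: "real^'n^'n \<Rightarrow> real^'n \<Rightarrow> real^'n \<Rightarrow> nat \<Rightarrow> real^'n" where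
  "gen_newton A b x0 0 = x0"
| "gen_newton A b x0 (Suc k) = matrix_inv (A - Dsign (gen_newton A b x0 k)) *v b"

end

theory Submission
  imports Defs "HOL-Computational_Algebra.Polynomial"
begin

text \<open>
  Write \<open>B = |A\<^sup>-\<^sup>1|\<close> and fix \<open>\<rho>(B) < r < 1/3\<close>. A Brouwer fixed-point argument gives a
  positive vector \<open>v\<close> with \<open>B v \<le> r v\<close>, so in the weighted maximum norm \<open>\<parallel>x\<parallel>\<^sub>v = max\<^sub>i |x\<^sub>i|/v\<^sub>i\<close>
  every componentwise estimate \<open>|x| \<le> B (|x| + 2|y|)\<close> yields \<open>\<parallel>x\<parallel>\<^sub>v \<le> q \<parallel>y\<parallel>\<^sub>v\<close> with
  \<open>q = 2r/(1 - r) < 1\<close>. The differences \<open>d\<^sub>k = x\<^sup>k\<^sup>+\<^sup>1 - x\<^sup>k\<close> of the Newton iterates satisfy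
  \<open>A d\<^sub>k\<^sub>+\<^sub>1 = D(x\<^sup>k\<^sup>+\<^sup>1) x\<^sup>k\<^sup>+\<^sup>2 - D(x\<^sup>k) x\<^sup>k\<^sup>+\<^sup>1\<close>, whose absolute value is at most
  \<open>|d\<^sub>k\<^sub>+\<^sub>1| + 2|d\<^sub>k|\<close>; hence they decay geometrically and the iterates converge. The same
  estimate with \<open>y = 0\<close> shows that \<open>A - D(w)\<close> is nonsingular and that \<open>Ax - |x| = b\<close> has at
  most one solution.
\<close>

section \<open>Characteristic matrices and the spectral radius\<close>

definition char_matrix :: "'a::ring_1 \<Rightarrow> 'a^'n^'n \<Rightarrow> 'a^'n^'n" where
  "char_matrix z M = (\<chi> i j. (if i = j then z else 0) - M $ i $ j)"

definition of_real_matrix :: "real^'n^'m \<Rightarrow> 'a::real_algebra_1^'n^'m" where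
  "of_real_matrix M = (\<chi> i j. of_real (M $ i $ j))"

lemma spectral_radius_def':
  "spectral_radius M = Max (cmod ` {z. det (char_matrix z (of_real_matrix M)) = 0})"
  unfolding spectral_radius_def char_matrix_def of_real_matrix_def
  by (simp add: setcompr_eq_image)

lemma char_matrix_mult_vec:
  fixes M :: "'a::comm_ring_1^'n^'n"
  shows "char_matrix c M *v x = c *s x - M *v x"
proof -
  have "(\<Sum>j\<in>UNIV. ((if i = j then c else 0) - M$i$j) * x$j)
      = (\<Sum>j\<in>UNIV. (if i = j then c * x$j else 0)) - (\<Sum>j\<in>UNIV. M$i$j * x$j)" for i
    by (simp add: left_diff_distrib sum_subtractf if_distrib[where f="\<lambda>a. a * _"] cong: if_cong)
  then show ?thesis
    by (simp add: vec_eq_iff matrix_vector_mult_def char_matrix_def)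
qed

lemma char_matrix_of_real:
  "char_matrix (of_real c) (of_real_matrix M) = (of_real_matrix (char_matrix c M) :: 'a::real_algebra_1^'n^'n)"
  by (simp add: vec_eq_iff char_matrix_def of_real_matrix_def)

lemma det_of_real_matrix:
  "det (of_real_matrix M :: 'a::{real_algebra_1, comm_ring_1}^'n^'n) = of_real (det M)"
  unfolding det_def of_real_matrix_def by simp

lemma det_char_matrix_poly:
  fixes M :: "'a::comm_ring_1^'n^'n"
  obtains p where "\<And>z. poly p z = det (char_matrix z M)"
proof
  let ?p = "\<Sum>\<pi>\<in>{\<pi>. \<pi> permutes (UNIV::'n set)}. smult (of_int (sign \<pi>))
      (\<Prod>i\<in>UNIV. [:- M $ i $ \<pi> i, if i = \<pi> i then 1 else 0:])"
  have entry: "poly [:- M $ i $ j, if i = j then 1 else 0:] z = (if i = j then z else 0) - M $ i $ j"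
    for i j z by auto
  show "poly ?p z = det (char_matrix z M)" for z
    unfolding det_def char_matrix_def by (simp add: poly_sum poly_prod entry del: poly_pCons)
qed

lemma finite_char_matrix_roots:
  fixes M :: "'a::idom^'n^'n"
  assumes "det (char_matrix z\<^sub>0 M) \<noteq> 0"
  shows "finite {z. det (char_matrix z M) = 0}"
proof -
  obtain p where p: "\<And>z. poly p z = det (char_matrix z M)"
    using det_char_matrix_poly by blast
  with assms have "p \<noteq> 0" by auto
  then show ?thesis using poly_roots_finite[of p] by (simp add: p)
qed

lemma invertible_iff_trivial_kernel:
  fixes M :: "'a::field^'n^'n"
  shows "invertible M \<longleftrightarrow> (\<forall>x. M *v x = 0 \<longrightarrow> x = 0)"
  by (simp add: invertible_left_inverse matrix_left_invertible_ker)

lemma matrix_inv_cancel: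
  fixes M :: "'a::field^'n^'n"
  assumes "invertible M"
  shows "M *v (matrix_inv M *v y) = y" "matrix_inv M *v (M *v y) = y"
proof -
  have "M ** matrix_inv M = mat 1 \<and> matrix_inv M ** M = mat 1"
    using someI_ex[OF assms[unfolded invertible_def]] unfolding matrix_inv_def .
  then show "M *v (matrix_inv M *v y) = y" "matrix_inv M *v (M *v y) = y"
    by (simp_all add: matrix_vector_mul_assoc)
qed

text \<open>\<open>spectral_radius\<close> is a \<open>Max\<close>, meaningful only over finitely many roots; a real point
  beyond the operator norm of \<open>M\<close> is not an eigenvalue, so the characteristic polynomial is nonzero.\<close>
lemma det_char_matrix_nonzero:
  fixes M :: "real^'n^'n"
  obtains z where "det (char_matrix z M) \<noteq> 0"
proof -
  obtain K where K: "0 < K" "\<And>x. norm (M *v x) \<le> norm x * K"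
    using bounded_linear.pos_bounded[OF matrix_vector_mul_bounded_linear] by blast
  have "invertible (char_matrix (K + 1) M)"
    unfolding invertible_iff_trivial_kernel
  proof (intro allI impI)
    fix x assume "char_matrix (K + 1) M *v x = 0"
    then have "M *v x = (K + 1) *\<^sub>R x" by (simp add: char_matrix_mult_vec scalar_mult_eq_scaleR)
    then have "(K + 1) * norm x \<le> norm x * K"
      using K by (metis abs_of_pos add_pos_pos norm_scaleR zero_less_one)
    then show "x = 0" by (simp add: algebra_simps)
  qed
  then show ?thesis using that invertible_det_nz by blast
qed

lemma eigenvalue_le_spectral_radius:
  fixes B :: "real^'n^'n"
  assumes "B *v x = l *s x" "x \<noteq> 0"
  shows "\<bar>l\<bar> \<le> spectral_radius B"
proof -
  let ?roots = "{z. det (char_matrix z (of_real_matrix B :: complex^'n^'n)) = 0}"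
  have "char_matrix l B *v x = 0" using assms(1) by (simp add: char_matrix_mult_vec)
  then have "det (char_matrix l B) = 0"
    using assms(2) invertible_det_nz invertible_iff_trivial_kernel by blast
  then have "complex_of_real l \<in> ?roots"
    by (simp add: char_matrix_of_real det_of_real_matrix)
  then have "\<bar>l\<bar> \<in> cmod ` ?roots" by (rule image_eqI[rotated]) simp
  moreover obtain z\<^sub>0 where "det (char_matrix z\<^sub>0 B) \<noteq> 0" using det_char_matrix_nonzero .
  then have "finite ?roots"
    by (intro finite_char_matrix_roots[of "complex_of_real z\<^sub>0"])
      (simp add: char_matrix_of_real det_of_real_matrix)
  ultimately show ?thesis unfolding spectral_radius_def' by simp
qed

section \<open>A positive subinvariant vector\<close>

definition prob_vectors :: "(real^'n) set" where
  "prob_vectors = {x. (\<forall>i. 0 \<le> x $ i) \<and> (\<Sum>i\<in>UNIV. x $ i) = 1}"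

lemma prob_vector_component_le_1:
  assumes "x \<in> prob_vectors"
  shows "x $ i \<le> 1"
proof -
  have "x $ i \<le> (\<Sum>j\<in>UNIV. x $ j)"
    using assms by (intro member_le_sum) (auto simp: prob_vectors_def)
  then show ?thesis using assms by (simp add: prob_vectors_def)
qed

lemma prob_vector_nonzero:
  assumes "x \<in> prob_vectors"
  shows "x \<noteq> 0"
proof
  assume "x = 0"
  with assms show False by (simp add: prob_vectors_def)
qed

lemma compact_prob_vectors: "compact (prob_vectors :: (real^'n) set)"
  unfolding compact_eq_bounded_closed
proof
  show "bounded (prob_vectors :: (real^'n) set)"
    unfolding bounded_iff
  proof (intro exI ballI)
    fix x :: "real^'n" assume "x \<in> prob_vectors"
    then have "(\<Sum>i\<in>UNIV. \<bar>x $ i\<bar>) = 1" unfolding prob_vectors_def by simp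
    then show "norm x \<le> 1" using norm_le_l1_cart[of x] by simp
  qed
  have "prob_vectors = (\<Inter>i. {x::real^'n. 0 \<le> x $ i}) \<inter> {x. (\<Sum>i\<in>UNIV. x $ i) = 1}"
    unfolding prob_vectors_def by auto
  also have "closed \<dots>"
    by (intro closed_Int closed_INT ballI closed_Collect_le closed_Collect_eq continuous_intros)
  finally show "closed (prob_vectors :: (real^'n) set)" .
qed

lemma convex_prob_vectors: "convex (prob_vectors :: (real^'n) set)"
  unfolding convex_def prob_vectors_def
  by (simp add: sum.distrib flip: sum_distrib_left)

lemma axis_in_prob_vectors: "axis i 1 \<in> prob_vectors"
  unfolding prob_vectors_def axis_def by auto

lemma nonneg_matrix_mult_nonneg:
  fixes B :: "real^'n^'m"
  assumes "\<And>i j. 0 \<le> B $ i $ j" "\<And>j. 0 \<le> x $ j"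
  shows "0 \<le> (B *v x) $ i"
  using assms by (simp add: matrix_vector_mult_def sum_nonneg)

text \<open>Brouwer's theorem applied to \<open>x \<mapsto> (B x + e\<one>) / \<Sum>\<^sub>i (B x + e\<one>)\<^sub>i\<close> on the probability vectors.\<close>
lemma nonneg_matrix_perturbed_eigenvector:
  fixes B :: "real^'n^'n"
  assumes nonneg: "\<And>i j. 0 \<le> B $ i $ j" and "0 < e"
  obtains x l where "x \<in> prob_vectors" "\<And>i. 0 < x $ i" "B *v x + e *\<^sub>R 1 = l *\<^sub>R x"
    "l \<le> (\<Sum>i\<in>UNIV. \<Sum>j\<in>UNIV. B $ i $ j) + e * CARD('n)"
proof -
  define y where "y x = B *v x + e *\<^sub>R 1" for x :: "real^'n"
  define \<sigma> where "\<sigma> x = (\<Sum>i\<in>UNIV. y x $ i)" for x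
  define g where "g x = inverse (\<sigma> x) *\<^sub>R y x" for x
  have y_ge: "e \<le> y x $ i" if "x \<in> prob_vectors" for x i
    using nonneg_matrix_mult_nonneg[OF nonneg, of x i] that by (simp add: prob_vectors_def y_def)
  have \<sigma>_pos: "0 < \<sigma> x" if "x \<in> prob_vectors" for x
    unfolding \<sigma>_def using y_ge[OF that] \<open>0 < e\<close> by (intro sum_pos) (auto intro: less_le_trans)
  have cont_y: "continuous_on prob_vectors y"
    unfolding y_def by (intro continuous_intros linear_continuous_on) simp
  then have "continuous_on prob_vectors \<sigma>"
    unfolding \<sigma>_def by (intro continuous_intros)
  moreover have "\<forall>x\<in>prob_vectors. \<sigma> x \<noteq> 0" using \<sigma>_pos by fastforce
  ultimately have cont_g: "continuous_on prob_vectors g"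
    unfolding g_def by (intro continuous_intros cont_y)
  have maps_g: "g \<in> prob_vectors \<rightarrow> prob_vectors"
  proof
    fix x :: "real^'n" assume x: "x \<in> prob_vectors"
    have "0 \<le> g x $ i" for i
    proof -
      have "0 \<le> inverse (\<sigma> x) * y x $ i"
        using y_ge[OF x, of i] \<sigma>_pos[OF x] \<open>0 < e\<close> by (intro mult_nonneg_nonneg) auto
      then show ?thesis by (simp add: g_def)
    qed
    moreover have "(\<Sum>i\<in>UNIV. g x $ i) = inverse (\<sigma> x) * \<sigma> x"
      by (simp add: g_def \<sigma>_def sum_distrib_left)
    ultimately show "g x \<in> prob_vectors"
      using \<sigma>_pos[OF x] unfolding prob_vectors_def by simp
  qed
  have "prob_vectors \<noteq> {}" using axis_in_prob_vectors by blast
  then obtain x where x: "x \<in> prob_vectors" "g x = x"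
    using brouwer[OF compact_prob_vectors convex_prob_vectors _ cont_g maps_g] by blast
  have eig: "B *v x + e *\<^sub>R 1 = \<sigma> x *\<^sub>R x"
  proof -
    have "\<sigma> x *\<^sub>R x = \<sigma> x *\<^sub>R g x" using x(2) by simp
    also have "\<dots> = y x" using \<sigma>_pos[OF x(1)] by (simp add: g_def)
    finally show ?thesis by (simp add: y_def)
  qed
  have pos: "0 < x $ i" for i
  proof -
    have "0 < \<sigma> x * x $ i"
      using arg_cong[OF eig, of "\<lambda>v. v $ i"] y_ge[OF x(1), of i] \<open>0 < e\<close> by (simp add: y_def)
    then show ?thesis using \<sigma>_pos[OF x(1)] zero_less_mult_pos by blast
  qed
  have "(B *v x) $ i \<le> (\<Sum>j\<in>UNIV. B $ i $ j)" for i
    unfolding matrix_vector_mult_def vec_lambda_beta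
    using prob_vector_component_le_1[OF x(1)] nonneg by (intro sum_mono mult_left_le)
  then have "(\<Sum>i\<in>UNIV. (B *v x) $ i) \<le> (\<Sum>i\<in>UNIV. \<Sum>j\<in>UNIV. B $ i $ j)"
    by (rule sum_mono)
  then have "\<sigma> x \<le> (\<Sum>i\<in>UNIV. \<Sum>j\<in>UNIV. B $ i $ j) + e * CARD('n)"
    by (simp add: \<sigma>_def y_def sum.distrib)
  with x(1) pos eig show ?thesis by (rule that)
qed

lemma eigenpair_of_perturbed_eigenpairs:
  fixes B :: "real^'n^'n"
  assumes "\<And>k. x k \<in> prob_vectors" "\<And>k. l k \<in> {a..b}"
    and eq: "\<And>k. B *v x k + e k *\<^sub>R 1 = l k *\<^sub>R x k" and "e \<longlonglongrightarrow> 0"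
  obtains y m where "y \<in> prob_vectors" "m \<in> {a..b}" "B *v y = m *\<^sub>R y"
proof -
  have "seq_compact (prob_vectors \<times> {a..b})"
    by (intro compact_imp_seq_compact compact_Times compact_prob_vectors compact_Icc)
  then obtain p \<phi> where p: "p \<in> prob_vectors \<times> {a..b}" "strict_mono \<phi>"
    "((\<lambda>k. (x k, l k)) \<circ> \<phi>) \<longlonglongrightarrow> p"
    by (rule seq_compactE) (use assms(1,2) in auto)
  obtain y m where ym: "p = (y, m)" by (cases p)
  have "(\<lambda>k. x (\<phi> k)) \<longlonglongrightarrow> y" "(\<lambda>k. l (\<phi> k)) \<longlonglongrightarrow> m"
    using tendsto_fst[OF p(3)] tendsto_snd[OF p(3)] unfolding comp_def ym by simp_all
  then have "(\<lambda>k. B *v x (\<phi> k) - l (\<phi> k) *\<^sub>R x (\<phi> k)) \<longlonglongrightarrow> B *v y - m *\<^sub>R y"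
    by (intro tendsto_diff tendsto_scaleR bounded_linear.tendsto[OF matrix_vector_mul_bounded_linear])
  moreover have residual: "B *v x k - l k *\<^sub>R x k = - e k *\<^sub>R 1" for k
  proof -
    have "B *v x k - l k *\<^sub>R x k = B *v x k - (B *v x k + e k *\<^sub>R 1)" by (simp only: eq)
    then show ?thesis by simp
  qed
  ultimately have "(\<lambda>k. - e (\<phi> k) *\<^sub>R (1 :: real^'n)) \<longlonglongrightarrow> B *v y - m *\<^sub>R y"
    by (simp only: residual)
  moreover have "(\<lambda>k. - e (\<phi> k) *\<^sub>R (1 :: real^'n)) \<longlonglongrightarrow> - 0 *\<^sub>R 1"
    using LIMSEQ_subseq_LIMSEQ[OF assms(4) p(2)] unfolding comp_def
    by (intro tendsto_scaleR tendsto_minus tendsto_const)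
  ultimately have "B *v y - m *\<^sub>R y = - 0 *\<^sub>R 1" by (rule LIMSEQ_unique)
  then have "B *v y = m *\<^sub>R y" by simp
  moreover have "y \<in> prob_vectors" "m \<in> {a..b}" using p(1) unfolding ym by simp_all
  ultimately show ?thesis using that by blast
qed

lemma subinvariant_if_perturbed_eigenvector:
  fixes B :: "real^'n^'n"
  assumes "B *v x + e *\<^sub>R 1 = l *\<^sub>R x" "0 \<le> e" "l \<le> r" "\<And>i. 0 \<le> x $ i"
  shows "B *v x \<le> r *\<^sub>R x"
  unfolding less_eq_vec_def
proof
  fix i
  have "(B *v x) $ i + e = l * x $ i" using arg_cong[OF assms(1), of "\<lambda>v. v $ i"] by simp
  moreover have "l * x $ i \<le> r * x $ i" using assms(3,4) by (rule mult_right_mono)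
  ultimately show "(B *v x) $ i \<le> (r *\<^sub>R x) $ i" using assms(2) by simp
qed

text \<open>Either some perturbed eigenvalue for \<open>e = 1/(k+1)\<close> is at most \<open>r\<close>, or a limit of
  perturbed eigenpairs is an eigenpair with eigenvalue at least \<open>r > \<rho>(B)\<close>.\<close>
lemma nonneg_matrix_subinvariant_vector:
  fixes B :: "real^'n^'n"
  assumes nonneg: "\<And>i j. 0 \<le> B $ i $ j" and "spectral_radius B < r"
  obtains v where "\<And>i. 0 < v $ i" "B *v v \<le> r *\<^sub>R v"
proof -
  define L where "L = (\<Sum>i\<in>UNIV. \<Sum>j\<in>UNIV. B $ i $ j) + CARD('n)"
  define e where "e k = inverse (real (Suc k))" for k
  let ?P = "\<lambda>k p. fst p \<in> prob_vectors \<and> (\<forall>i. 0 < fst p $ i) \<and> snd p \<le> L \<and>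
    B *v fst p + e k *\<^sub>R 1 = snd p *\<^sub>R fst p"
  have "\<exists>p. ?P k p" for k
  proof -
    have e: "0 < e k" "e k \<le> 1" unfolding e_def by (simp_all add: inverse_le_1_iff)
    obtain x l where x: "x \<in> prob_vectors" "\<And>i. 0 < x $ i" "B *v x + e k *\<^sub>R 1 = l *\<^sub>R x"
      and l: "l \<le> (\<Sum>i\<in>UNIV. \<Sum>j\<in>UNIV. B $ i $ j) + e k * CARD('n)"
      using nonneg_matrix_perturbed_eigenvector[OF nonneg e(1)] by blast
    have "l \<le> L"
      using l mult_left_le_one_le[of "real CARD('n)" "e k"] e unfolding L_def by linarith
    with x show ?thesis by (intro exI[of _ "(x, l)"]) simp
  qed
  then obtain f where "\<And>k. ?P k (f k)" using choice[of ?P] by blast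
  then have f: "fst (f k) \<in> prob_vectors" "\<And>i. 0 < fst (f k) $ i" "snd (f k) \<le> L"
    "B *v fst (f k) + e k *\<^sub>R 1 = snd (f k) *\<^sub>R fst (f k)" for k
    by simp_all
  show ?thesis
  proof (cases "\<exists>k. snd (f k) \<le> r")
    case True
    then obtain k where "snd (f k) \<le> r" by blast
    moreover have "0 \<le> e k" by (simp add: e_def)
    ultimately have "B *v fst (f k) \<le> r *\<^sub>R fst (f k)"
      by (intro subinvariant_if_perturbed_eigenvector[OF f(4)] less_imp_le[OF f(2)])
    with f(2) show ?thesis by (rule that)
  next
    case False
    then have ivl: "snd (f k) \<in> {r..L}" for k using f(3)[of k] by (simp add: not_le less_imp_le)
    have "e \<longlonglongrightarrow> 0"
      unfolding e_def using LIMSEQ_inverse_real_of_nat .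
    then obtain y m where y: "y \<in> prob_vectors" and "m \<in> {r..L}" "B *v y = m *\<^sub>R y"
      by (rule eigenpair_of_perturbed_eigenpairs[OF f(1) ivl f(4)])
    then have "r \<le> m" "B *v y = m *s y" by (simp_all add: scalar_mult_eq_scaleR)
    moreover have "\<bar>m\<bar> \<le> spectral_radius B"
      using \<open>B *v y = m *s y\<close> prob_vector_nonzero[OF y] by (rule eigenvalue_le_spectral_radius)
    ultimately show ?thesis using assms(2) abs_ge_self[of m] by linarith
  qed
qed

section \<open>The weighted maximum norm\<close>

definition wmax_norm :: "real^'n \<Rightarrow> real^'n \<Rightarrow> real" where
  "wmax_norm v x = Max (range (\<lambda>i. \<bar>x $ i\<bar> / v $ i))"

lemma abs_le_wmax_norm:
  assumes "0 < v $ i"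
  shows "\<bar>x $ i\<bar> \<le> wmax_norm v x * v $ i"
proof -
  have "\<bar>x $ i\<bar> / v $ i \<le> wmax_norm v x" unfolding wmax_norm_def by simp
  then show ?thesis using assms by (simp add: divide_le_eq)
qed

lemma wmax_norm_le:
  assumes "\<And>i. 0 < v $ i" "\<And>i. \<bar>x $ i\<bar> \<le> t * v $ i"
  shows "wmax_norm v x \<le> t"
  unfolding wmax_norm_def using assms by (auto simp: divide_le_eq)

lemma wmax_norm_nonneg:
  assumes "\<And>i. 0 < v $ i"
  shows "0 \<le> wmax_norm v x"
  using abs_le_wmax_norm[OF assms, of x] assms by (meson abs_ge_zero order_trans zero_le_mult_iff not_le)

lemma norm_le_wmax_norm:
  assumes "\<And>i. 0 < v $ i"
  shows "norm x \<le> wmax_norm v x * (\<Sum>i\<in>UNIV. v $ i)"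
proof -
  have "norm x \<le> (\<Sum>i\<in>UNIV. \<bar>x $ i\<bar>)" by (rule norm_le_l1_cart)
  also have "\<dots> \<le> (\<Sum>i\<in>UNIV. wmax_norm v x * v $ i)" by (intro sum_mono abs_le_wmax_norm assms)
  finally show ?thesis by (simp add: sum_distrib_left)
qed

lemma vec_abs_mult_le: "vec_abs (M *v y) \<le> mat_abs M *v vec_abs y"
  by (simp add: less_eq_vec_def vec_abs_def mat_abs_def matrix_vector_mult_def
      order_trans[OF sum_abs] abs_mult)

lemma mat_abs_nonneg: "0 \<le> mat_abs M $ i $ j"
  by (simp add: mat_abs_def)

lemma nonneg_matrix_mult_mono:
  fixes B :: "real^'n^'m"
  assumes "\<And>i j. 0 \<le> B $ i $ j" "x \<le> y"
  shows "B *v x \<le> B *v y"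
  using assms by (auto simp: less_eq_vec_def matrix_vector_mult_def intro!: sum_mono mult_left_mono)

lemma wmax_norm_contraction:
  fixes B :: "real^'n^'n"
  assumes nonneg: "\<And>i j. 0 \<le> B $ i $ j" and v: "\<And>i. 0 < v $ i" and subinv: "B *v v \<le> r *\<^sub>R v"
    and "r < 1" "0 \<le> c"
    and dom: "vec_abs x \<le> B *v (vec_abs x + c *\<^sub>R vec_abs y)"
  shows "wmax_norm v x \<le> c * r / (1 - r) * wmax_norm v y"
proof -
  let ?s = "wmax_norm v x" and ?t = "wmax_norm v y"
  have st: "0 \<le> ?s + c * ?t"
    using wmax_norm_nonneg[OF v] \<open>0 \<le> c\<close> by (intro add_nonneg_nonneg mult_nonneg_nonneg)
  have "vec_abs x + c *\<^sub>R vec_abs y \<le> (?s + c * ?t) *\<^sub>R v"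
    unfolding less_eq_vec_def
  proof
    fix i
    have "c * \<bar>y $ i\<bar> \<le> c * (?t * v $ i)"
      by (rule mult_left_mono[OF abs_le_wmax_norm[OF v] \<open>0 \<le> c\<close>])
    then show "(vec_abs x + c *\<^sub>R vec_abs y) $ i \<le> ((?s + c * ?t) *\<^sub>R v) $ i"
      using abs_le_wmax_norm[OF v, of x i] by (simp add: vec_abs_def distrib_right mult.assoc)
  qed
  then have "B *v (vec_abs x + c *\<^sub>R vec_abs y) \<le> (?s + c * ?t) *\<^sub>R (B *v v)"
    unfolding matrix_vector_mult_scaleR[symmetric] by (rule nonneg_matrix_mult_mono[OF nonneg])
  also have "\<dots> \<le> ((?s + c * ?t) * r) *\<^sub>R v"
    unfolding less_eq_vec_def
  proof
    fix i
    have "(B *v v) $ i \<le> r * v $ i" using subinv by (simp add: less_eq_vec_def)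
    then show "((?s + c * ?t) *\<^sub>R (B *v v)) $ i \<le> (((?s + c * ?t) * r) *\<^sub>R v) $ i"
      using mult_left_mono[OF _ st] by (simp add: mult.assoc)
  qed
  finally have "vec_abs x \<le> ((?s + c * ?t) * r) *\<^sub>R v"
    by (rule order_trans[OF dom])
  then have "?s \<le> (?s + c * ?t) * r"
    by (intro wmax_norm_le v) (simp add: less_eq_vec_def vec_abs_def)
  then have "?s * (1 - r) \<le> c * r * ?t" by (simp add: algebra_simps)
  then show ?thesis using \<open>r < 1\<close> by (simp add: pos_le_divide_eq)
qed

lemma vec_abs_le_mult_imp_zero:
  fixes B :: "real^'n^'n"
  assumes "\<And>i j. 0 \<le> B $ i $ j" "\<And>i. 0 < v $ i" "B *v v \<le> r *\<^sub>R v" "r < 1"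
    and "vec_abs x \<le> B *v vec_abs x"
  shows "x = 0"
proof -
  have "wmax_norm v x \<le> 0"
    using wmax_norm_contraction[of B v r 0 x 0] assms by simp
  then have "\<bar>x $ i\<bar> \<le> 0" for i
    using abs_le_wmax_norm[OF assms(2), of x i] mult_nonpos_nonneg[of "wmax_norm v x" "v $ i"] assms(2)[of i]
    by linarith
  then show ?thesis by (simp add: vec_eq_iff)
qed

lemma Dsign_mult_vec: "(Dsign w *v y) $ i = sgn (w $ i) * y $ i"
proof -
  have "(\<Sum>j\<in>UNIV. (if i = j then sgn (w $ i) else 0) * y $ j)
      = (\<Sum>j\<in>UNIV. if i = j then sgn (w $ i) * y $ j else 0)"
    by (rule sum.cong) auto
  then show ?thesis by (simp add: Dsign_def matrix_vector_mult_def)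
qed

lemma Dsign_mult_self: "Dsign w *v w = vec_abs w"
  by (simp add: vec_eq_iff Dsign_mult_vec vec_abs_def sgn_mult_abs abs_sgn)

lemma vec_abs_Dsign_mult_le: "vec_abs (Dsign w *v y) \<le> vec_abs y"
  by (auto simp: less_eq_vec_def vec_abs_def Dsign_mult_vec abs_mult sgn_if)

lemma norm_Dsign_mult_le: "norm (Dsign w *v y) \<le> norm y"
  using vec_abs_Dsign_mult_le[of w y]
  by (intro norm_le_componentwise_cart) (simp add: less_eq_vec_def vec_abs_def)

lemma abs_sgn_step_le: "\<bar>sgn (a::real) * c - sgn a' * a\<bar> \<le> \<bar>c - a\<bar> + 2 * \<bar>a - a'\<bar>"
  by (auto simp: sgn_if abs_if)

lemma vec_abs_Dsign_step_le:
  "vec_abs (Dsign y *v z - Dsign x *v y) \<le> vec_abs (z - y) + 2 *\<^sub>R vec_abs (y - x)"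
  by (simp add: less_eq_vec_def vec_abs_def Dsign_mult_vec abs_sgn_step_le)

lemma vec_abs_diff_vec_abs_le: "vec_abs (vec_abs x - vec_abs y) \<le> vec_abs (x - y)"
  by (simp add: less_eq_vec_def vec_abs_def abs_triangle_ineq3)

lemma tendsto_vec_abs:
  assumes "(X \<longlongrightarrow> a) F"
  shows "((\<lambda>k. vec_abs (X k)) \<longlongrightarrow> vec_abs a) F"
  unfolding vec_abs_def by (intro vec_tendstoI) (auto intro!: tendsto_rabs tendsto_vec_nth assms)

lemma convergent_if_summable_diff:
  fixes X :: "nat \<Rightarrow> 'a::banach"
  assumes "summable (\<lambda>k. X (Suc k) - X k)"
  shows "convergent X"
proof -
  have "(\<lambda>k. X 0 + (\<Sum>i<k. X (Suc i) - X i)) \<longlonglongrightarrow> X 0 + (\<Sum>k. X (Suc k) - X k)"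
    by (intro tendsto_add tendsto_const summable_LIMSEQ assms)
  then show ?thesis by (auto simp: sum_lessThan_telescope convergent_def)
qed

section \<open>The generalized Newton iteration\<close>

locale abs_equation_contraction =
  fixes A :: "real^'n^'n" and v :: "real^'n" and r :: real
  assumes invertible_A: "invertible A"
    and v_pos: "\<And>i. 0 < v $ i"
    and subinvariant: "mat_abs (matrix_inv A) *v v \<le> r *\<^sub>R v"
    and r_less: "r < 1/3"
begin

lemma r_nonneg: "0 \<le> r"
proof -
  obtain i :: 'n where True by simp
  have "0 \<le> (mat_abs (matrix_inv A) *v v) $ i"
    by (rule nonneg_matrix_mult_nonneg[OF mat_abs_nonneg less_imp_le[OF v_pos]])
  also have "\<dots> \<le> r * v $ i" using subinvariant by (simp add: less_eq_vec_def)
  finally show ?thesis using mult_le_cancel_right_pos[OF v_pos[of i], of 0 r] by simp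
qed

lemma vec_abs_le_inverse_mult:
  assumes "A *v z = u"
  shows "vec_abs z \<le> mat_abs (matrix_inv A) *v vec_abs u"
proof -
  have "matrix_inv A *v u = z"
    using matrix_inv_cancel(2)[OF invertible_A, of z] unfolding assms .
  then show ?thesis using vec_abs_mult_le[of "matrix_inv A" u] by simp
qed

lemma eq_zero_if_image_dominated:
  assumes "A *v z = u" "vec_abs u \<le> vec_abs z"
  shows "z = 0"
proof (rule vec_abs_le_mult_imp_zero[OF mat_abs_nonneg v_pos subinvariant])
  show "r < 1" using r_less by simp
  show "vec_abs z \<le> mat_abs (matrix_inv A) *v vec_abs z"
    using vec_abs_le_inverse_mult[OF assms(1)] nonneg_matrix_mult_mono[OF mat_abs_nonneg assms(2)]
    by (rule order_trans)
qed

lemma invertible_minus_Dsign: "invertible (A - Dsign w)"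
  unfolding invertible_iff_trivial_kernel
proof (intro allI impI)
  fix z assume "(A - Dsign w) *v z = 0"
  then have "A *v z = Dsign w *v z" by (simp add: matrix_vector_mult_diff_rdistrib)
  then show "z = 0" using vec_abs_Dsign_mult_le by (rule eq_zero_if_image_dominated)
qed

lemma abs_equation_unique:
  assumes "A *v y - vec_abs y = b" "A *v z - vec_abs z = b"
  shows "y = z"
proof -
  have "A *v (y - z) = (b + vec_abs y) - (b + vec_abs z)"
    using assms unfolding matrix_vector_mult_diff_distrib diff_eq_eq by simp
  then have "A *v (y - z) = vec_abs y - vec_abs z" by simp
  then have "y - z = 0" using vec_abs_diff_vec_abs_le by (rule eq_zero_if_image_dominated)
  then show ?thesis by simp
qed

lemma gen_newton_Suc:
  "A *v gen_newton A b x0 (Suc k) = b + Dsign (gen_newton A b x0 k) *v gen_newton A b x0 (Suc k)"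
  using matrix_inv_cancel(1)[OF invertible_minus_Dsign, of "gen_newton A b x0 k" b]
  by (simp add: algebra_simps)

lemma gen_newton_diff_contraction:
  fixes b x0 :: "real^'n"
  defines "x \<equiv> gen_newton A b x0"
  shows "wmax_norm v (x (Suc (Suc k)) - x (Suc k))
    \<le> 2 * r / (1 - r) * wmax_norm v (x (Suc k) - x k)"
proof (rule wmax_norm_contraction[OF mat_abs_nonneg v_pos subinvariant])
  show "r < 1" using r_less by simp
  have "A *v (x (Suc (Suc k)) - x (Suc k)) = Dsign (x (Suc k)) *v x (Suc (Suc k)) - Dsign (x k) *v x (Suc k)"
    unfolding x_def matrix_vector_mult_diff_distrib gen_newton_Suc by simp
  from vec_abs_le_inverse_mult[OF this] vec_abs_Dsign_step_le
  show "vec_abs (x (Suc (Suc k)) - x (Suc k))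
    \<le> mat_abs (matrix_inv A) *v (vec_abs (x (Suc (Suc k)) - x (Suc k)) + 2 *\<^sub>R vec_abs (x (Suc k) - x k))"
    by (rule order_trans[OF _ nonneg_matrix_mult_mono[OF mat_abs_nonneg]])
qed simp

lemma gen_newton_convergent: "convergent (gen_newton A b x0)"
proof (rule convergent_if_summable_diff)
  define x where "x = gen_newton A b x0"
  define q where "q = 2 * r / (1 - r)"
  have q: "0 \<le> q" "q < 1" using r_nonneg r_less unfolding q_def by (auto simp: field_simps)
  define w\<^sub>0 where "w\<^sub>0 = wmax_norm v (x 1 - x 0)"
  define V where "V = (\<Sum>i\<in>UNIV. v $ i)"
  have decay: "wmax_norm v (x (Suc k) - x k) \<le> q ^ k * w\<^sub>0" for k
  proof (induction k)
    case (Suc k)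
    then show ?case
      using gen_newton_diff_contraction[of b x0 k] mult_left_mono[OF Suc q(1)]
      unfolding x_def q_def w\<^sub>0_def by (simp add: mult.assoc)
  qed (simp add: w\<^sub>0_def)
  have "norm (x (Suc k) - x k) \<le> q ^ k * w\<^sub>0 * V" for k
  proof -
    have "norm (x (Suc k) - x k) \<le> wmax_norm v (x (Suc k) - x k) * V"
      unfolding V_def by (rule norm_le_wmax_norm[OF v_pos])
    also have "\<dots> \<le> q ^ k * w\<^sub>0 * V"
      using v_pos unfolding V_def by (intro mult_right_mono decay sum_nonneg) (simp add: less_imp_le)
    finally show ?thesis .
  qed
  moreover have "summable (\<lambda>k. q ^ k * w\<^sub>0 * V)"
    using q by (intro summable_mult2 summable_geometric) simp
  ultimately show "summable (\<lambda>k. gen_newton A b x0 (Suc k) - gen_newton A b x0 k)"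
    unfolding x_def by (rule summable_comparison_test'[rotated])
qed

text \<open>The iteration is \<open>A x\<^sup>k\<^sup>+\<^sup>1 - |x\<^sup>k| - D(x\<^sup>k) (x\<^sup>k\<^sup>+\<^sup>1 - x\<^sup>k) = b\<close>; the discontinuous factor
  \<open>D(x\<^sup>k)\<close> only multiplies a vanishing difference.\<close>
lemma gen_newton_limit_solves:
  assumes lim: "gen_newton A b x0 \<longlonglongrightarrow> xs"
  shows "A *v xs - vec_abs xs = b"
proof -
  define x where "x = gen_newton A b x0"
  have step: "A *v x (Suc k) - vec_abs (x k) - Dsign (x k) *v (x (Suc k) - x k) = b" for k
    using gen_newton_Suc[of b x0 k] Dsign_mult_self
    by (simp add: x_def matrix_vector_mult_diff_distrib)
  have "(\<lambda>k. x (Suc k) - x k) \<longlonglongrightarrow> 0"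
    using tendsto_diff[OF LIMSEQ_Suc[OF lim] lim] unfolding x_def by simp
  then have "(\<lambda>k. Dsign (x k) *v (x (Suc k) - x k)) \<longlonglongrightarrow> 0"
    by (rule Lim_null_comparison[rotated, OF tendsto_norm_zero])
      (intro always_eventually allI norm_Dsign_mult_le)
  moreover have "(\<lambda>k. A *v x (Suc k)) \<longlonglongrightarrow> A *v xs"
    using lim unfolding x_def
    by (intro bounded_linear.tendsto[OF matrix_vector_mul_bounded_linear] LIMSEQ_Suc)
  moreover have "(\<lambda>k. vec_abs (x k)) \<longlonglongrightarrow> vec_abs xs"
    using lim unfolding x_def by (rule tendsto_vec_abs)
  ultimately have "(\<lambda>k. A *v x (Suc k) - vec_abs (x k) - Dsign (x k) *v (x (Suc k) - x k))
      \<longlonglongrightarrow> A *v xs - vec_abs xs - 0"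
    by (intro tendsto_diff)
  then have "(\<lambda>k. b) \<longlonglongrightarrow> A *v xs - vec_abs xs" by (simp add: step)
  then show ?thesis by (simp add: LIMSEQ_const_iff)
qed

end

theorem theorem3p7:
  fixes A :: "real^'n^'n"
  assumes "invertible A"
    and "spectral_radius (mat_abs (matrix_inv A)) < 1/3"
  shows "\<forall>(b :: real^'n) (x0 :: real^'n).
           (\<forall>k. invertible (A - Dsign (gen_newton A b x0 k))) \<and>
           (\<exists>xs. (\<forall>y. A *v y - vec_abs y = b \<longleftrightarrow> y = xs) \<and>
                 gen_newton A b x0 \<longlonglongrightarrow> xs)"
proof (intro allI)
  fix b x0 :: "real^'n"
  define r where "r = (spectral_radius (mat_abs (matrix_inv A)) + 1/3) / 2"
  have r: "spectral_radius (mat_abs (matrix_inv A)) < r" "r < 1/3"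
    using assms(2) unfolding r_def by simp_all
  obtain v where "\<And>i. 0 < v $ i" "mat_abs (matrix_inv A) *v v \<le> r *\<^sub>R v"
    using nonneg_matrix_subinvariant_vector[OF mat_abs_nonneg r(1)] by blast
  then interpret abs_equation_contraction A v r
    using assms(1) r(2) by unfold_locales auto
  obtain xs where lim: "gen_newton A b x0 \<longlonglongrightarrow> xs"
    using gen_newton_convergent convergent_def by blast
  have "A *v y - vec_abs y = b \<longleftrightarrow> y = xs" for y
    using gen_newton_limit_solves[OF lim] abs_equation_unique[of y b xs] by auto
  then show "(\<forall>k. invertible (A - Dsign (gen_newton A b x0 k))) \<and>
      (\<exists>xs. (\<forall>y. A *v y - vec_abs y = b \<longleftrightarrow> y = xs) \<and> gen_newton A b x0 \<longlonglongrightarrow> xs)"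
    using invertible_minus_Dsign lim by blast
qed

end
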